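(* Let $q$ be a prime power with $q\equiv 1 \pmod 3$, let $\delta\in\mathbb{F}_q$ be a cubic nonresidue, and let $\mathbb{F}_q(\delta^{1/3})$ be the cubic extension of $\mathbb{F}_q$ obtained by adjoining a cube root $\delta^{1/3}$ of $\delta$, with $\mathbb{F}_q$-basis $\{1,\delta^{1/3},\delta^{2/3}\}$. Writing $\alpha=\alpha_1+\alpha_2\delta^{1/3}+\alpha_3\delta^{2/3}$ with $\alpha_i\in\mathbb{F}_q$, define \[\mathbb{H}_q=\left\{(\alpha,\beta)\in \mathbb{F}_q(\delta^{1/3})\times \mathbb{F}_q(\delta^{1/3}) : \alpha_2\beta_3-\alpha_3\beta_2\neq 0\right\}.\] Then the rule \[ \begin{bmatrix} a & b & c\\ d & e & f\\ r & s & t \end{bmatrix} (\alpha,\beta) = \left(\frac{a\alpha+b\beta+c}{r\alpha+s\beta+t}, \frac{d\alpha+e\beta+f}{r\alpha+s\beta+t} \right) \] is well defined for every matrix in $\mathrm{GL}_3(\mathbb{F}_q)$ and every $(\alpha,\beta)\in\mathbb{H}_q$ (i.e. the denominator is nonzero and the image lies in $\mathbb{H}_q$), and it defines a (left) group action of $\mathrm{GL}_3(\mathbb{F}_q)$ on $\mathbb{H}_q$.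
   Context: $\mathrm{GL}_3(\mathbb{F}_q)$ is the group of invertible $3\times 3$ matrices over the finite field $\mathbb{F}_q$. A cubic nonresidue is an element of $\mathbb{F}_q^\times$ that is not a cube in $\mathbb{F}_q$. *)

theory Defs
  imports "HOL-Analysis.Analysis" "HOL-Library.Numeral_Type"
begin

text \<open>The cubic extension F_q(delta^(1/3)) of a field 'a, modelled concretely as
  triples (a1,a2,a3) standing for a1 + a2*theta + a3*theta^2 with theta^3 = delta.\<close>

type_synonym 'a cub = "'a \<times> 'a \<times> 'a"

definition cubic_nonresidue :: "'a::field \<Rightarrow> bool" where
  "cubic_nonresidue d \<longleftrightarrow> d \<noteq> 0 \<and> \<not> (\<exists>x. x ^ 3 = d)"

definition cub_of :: "'a::field \<Rightarrow> 'a cub" where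
  "cub_of a = (a, 0, 0)"

definition cub_add :: "'a::field cub \<Rightarrow> 'a cub \<Rightarrow> 'a cub" where
  "cub_add x y = (case x of (x1, x2, x3) \<Rightarrow> case y of (y1, y2, y3) \<Rightarrow>
     (x1 + y1, x2 + y2, x3 + y3))"

definition cub_mul :: "'a::field \<Rightarrow> 'a cub \<Rightarrow> 'a cub \<Rightarrow> 'a cub" where
  "cub_mul d x y = (case x of (x1, x2, x3) \<Rightarrow> case y of (y1, y2, y3) \<Rightarrow>
     (x1 * y1 + d * (x2 * y3 + x3 * y2),
      x1 * y2 + x2 * y1 + d * (x3 * y3),
      x1 * y3 + x2 * y2 + x3 * y1))"

definition cub_inv :: "'a::field \<Rightarrow> 'a cub \<Rightarrow> 'a cub" where
  "cub_inv d x = (if \<exists>y. cub_mul d x y = cub_of 1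
                   then (SOME y. cub_mul d x y = cub_of 1) else cub_of 0)"

definition cub_div :: "'a::field \<Rightarrow> 'a cub \<Rightarrow> 'a cub \<Rightarrow> 'a cub" where
  "cub_div d x y = cub_mul d x (cub_inv d y)"

definition cub_lin :: "'a::field \<Rightarrow> 'a \<Rightarrow> 'a \<Rightarrow> 'a \<Rightarrow> 'a cub \<Rightarrow> 'a cub \<Rightarrow> 'a cub" where
  "cub_lin d a b c \<alpha> \<beta> =
     cub_add (cub_add (cub_mul d (cub_of a) \<alpha>) (cub_mul d (cub_of b) \<beta>)) (cub_of c)"

definition Hq :: "('a::field cub \<times> 'a cub) set" where
  "Hq = {(\<alpha>, \<beta>). fst (snd \<alpha>) * snd (snd \<beta>) - snd (snd \<alpha>) * fst (snd \<beta>) \<noteq> 0}"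

definition denom :: "'a::field \<Rightarrow> 'a^3^3 \<Rightarrow> 'a cub \<times> 'a cub \<Rightarrow> 'a cub" where
  "denom d A p = cub_lin d (A$3$1) (A$3$2) (A$3$3) (fst p) (snd p)"

definition act :: "'a::field \<Rightarrow> 'a^3^3 \<Rightarrow> 'a cub \<times> 'a cub \<Rightarrow> 'a cub \<times> 'a cub" where
  "act d A p =
     (cub_div d (cub_lin d (A$1$1) (A$1$2) (A$1$3) (fst p) (snd p)) (denom d A p),
      cub_div d (cub_lin d (A$2$1) (A$2$2) (A$2$3) (fst p) (snd p)) (denom d A p))"

end

theory Submission
  imports Defs "HOL-Computational_Algebra.Polynomial_Factorial"
begin

text \<open>Let D(x, y, z) be the determinant of the coordinate vectors of three elements of
  F_q(\<delta>^(1/3)), so that (\<alpha>, \<beta>) \<in> H_q says exactly D(\<alpha>, \<beta>, 1) \<noteq> 0. If u, v, w are the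
  values at (\<alpha>, \<beta>) of the three affine forms given by the rows of A, then
  D(u, v, w) = det A * D(\<alpha>, \<beta>, 1) \<noteq> 0, so w \<noteq> 0. Multiplication by w scales D by the norm
  of w, whence D(u, v, w) = N(w) * D(u/w, v/w, 1) and the image lies in H_q. Division makes
  sense because X^3 - \<delta> has no root and is therefore irreducible, so the extension is a
  field; compatibility with matrix products is the usual computation with fractions over a
  common denominator.\<close>

lemma cub_mul_commute: "cub_mul d x y = cub_mul d y x"
  by (cases x rule: prod_cases3; cases y rule: prod_cases3) (simp add: cub_mul_def algebra_simps)

lemma cub_mul_assoc: "cub_mul d (cub_mul d x y) z = cub_mul d x (cub_mul d y z)"
  by (cases x rule: prod_cases3; cases y rule: prod_cases3; cases z rule: prod_cases3)
     (simp add: cub_mul_def algebra_simps)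

lemma cub_mul_one_right: "cub_mul d x (cub_of 1) = x"
  by (cases x rule: prod_cases3) (simp add: cub_mul_def cub_of_def)

lemma cub_mul_one_left: "cub_mul d (cub_of 1) x = x"
  using cub_mul_commute cub_mul_one_right by metis

lemma cub_mul_zero_left: "cub_mul d (cub_of 0) x = cub_of 0"
  by (cases x rule: prod_cases3) (simp add: cub_mul_def cub_of_def)

lemma cub_inverse_unique:
  assumes "cub_mul d x y = cub_of 1" and "cub_mul d x z = cub_of 1"
  shows "y = z"
  by (metis assms cub_mul_assoc cub_mul_commute cub_mul_one_left)

definition cub_poly :: "'a::field cub \<Rightarrow> 'a poly" where
  "cub_poly x = (case x of (x1, x2, x3) \<Rightarrow> [:x1, x2, x3:])"

lemma cub_poly_eq_0_iff: "cub_poly x = 0 \<longleftrightarrow> x = cub_of 0"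
  by (cases x rule: prod_cases3) (auto simp: cub_poly_def cub_of_def)

lemma degree_cub_poly: "degree (cub_poly x) \<le> 2"
  by (cases x rule: prod_cases3) (simp add: cub_poly_def)

lemma cub_poly_mult:
  "[:-d, 0, 0, 1:] dvd cub_poly x * cub_poly y - cub_poly (cub_mul d x y)"
proof (cases x rule: prod_cases3)
  case (fields x1 x2 x3)
  show ?thesis
  proof (cases y rule: prod_cases3)
    case (fields y1 y2 y3)
    show ?thesis
      by (rule dvdI[where k = "[:x2 * y3 + x3 * y2, x3 * y3:]"])
         (simp add: \<open>x = (x1, x2, x3)\<close> fields cub_poly_def cub_mul_def algebra_simps)
  qed
qed

lemma linear_poly_has_root:
  fixes g :: "'a::field poly"
  assumes "degree g = 1"
  shows "\<exists>x. poly g x = 0"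
proof -
  have "coeff g 1 \<noteq> 0"
    using assms by (metis leading_coeff_0_iff zero_neq_one degree_0)
  moreover have "poly g x = coeff g 0 + coeff g 1 * x" for x
    using assms by (simp add: poly_altdef)
  ultimately have "poly g (- coeff g 0 / coeff g 1) = 0"
    by simp
  then show ?thesis ..
qed

lemma irreducible_if_no_roots:
  fixes p :: "'a::field poly"
  assumes "0 < degree p" and "degree p \<le> 3" and no_root: "\<And>x. poly p x \<noteq> 0"
  shows "irreducible p"
proof (rule irreducibleI)
  show "p \<noteq> 0" and "\<not> is_unit p"
    using assms(1) by (auto simp: is_unit_poly_iff)
  fix g h assume p: "p = g * h"
  then have "g \<noteq> 0" "h \<noteq> 0"
    using \<open>p \<noteq> 0\<close> by auto
  then have degrees: "degree g + degree h \<le> 3"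
    using p assms(2) by (simp add: degree_mult_eq)
  show "is_unit g \<or> is_unit h"
  proof (rule ccontr)
    assume "\<not> (is_unit g \<or> is_unit h)"
    then have "degree g \<noteq> 0" "degree h \<noteq> 0"
      using \<open>g \<noteq> 0\<close> \<open>h \<noteq> 0\<close> by (auto simp: is_unit_iff_degree)
    then have "degree g = 1 \<or> degree h = 1"
      using degrees by linarith
    then obtain x where "poly g x = 0 \<or> poly h x = 0"
      using linear_poly_has_root by blast
    with p no_root show False
      by auto
  qed
qed

lemma irreducible_pure_cubic:
  fixes d :: "'a::field"
  assumes "\<nexists>x. x ^ 3 = d"
  shows "irreducible [:-d, 0, 0, 1:]"
  by (rule irreducible_if_no_roots) (use assms in \<open>auto simp: algebra_simps power3_eq_cube\<close>)

lemma cub_no_zero_divisors: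
  fixes d :: "'a::field"
  assumes "\<nexists>x. x ^ 3 = d" and "cub_mul d x y = cub_of 0"
  shows "x = cub_of 0 \<or> y = cub_of 0"
proof -
  let ?m = "[:-d, 0, 0, 1:]"
  have "prime_elem ?m"
    using irreducible_pure_cubic[OF assms(1)] by (rule field_poly_irreducible_imp_prime)
  moreover have "?m dvd cub_poly x * cub_poly y"
    using cub_poly_mult[of d x y] by (simp add: assms(2) cub_poly_eq_0_iff[THEN iffD2])
  ultimately have "?m dvd cub_poly x \<or> ?m dvd cub_poly y"
    by (simp add: prime_elem_dvd_mult_iff)
  moreover have "cub_poly z = 0" if "?m dvd cub_poly z" for z :: "'a cub"
    using dvd_imp_degree_le[OF that] degree_cub_poly[of z] by fastforce
  ultimately show ?thesis
    by (metis cub_poly_eq_0_iff)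
qed

lemma inj_cub_mul:
  fixes d :: "'a::field"
  assumes "\<nexists>x. x ^ 3 = d" and "x \<noteq> cub_of 0"
  shows "inj (cub_mul d x)"
proof (rule injI)
  fix y z assume eq: "cub_mul d x y = cub_mul d x z"
  obtain y1 y2 y3 z1 z2 z3 where yz: "y = (y1, y2, y3)" "z = (z1, z2, z3)"
    by (cases y rule: prod_cases3; cases z rule: prod_cases3)
  have "cub_mul d x (y1 - z1, y2 - z2, y3 - z3) = cub_of 0"
    using eq by (cases x rule: prod_cases3) (simp add: yz cub_mul_def cub_of_def algebra_simps)
  then have "(y1 - z1, y2 - z2, y3 - z3) = cub_of 0"
    using cub_no_zero_divisors[OF assms(1)] assms(2) by blast
  then show "y = z"
    by (simp add: yz cub_of_def)
qed

lemma cub_mul_cub_inv: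
  fixes d :: "'a::{field,finite}"
  assumes "\<nexists>x. x ^ 3 = d" and "x \<noteq> cub_of 0"
  shows "cub_mul d x (cub_inv d x) = cub_of 1"
proof -
  have "surj (cub_mul d x)"
    using finite_UNIV_inj_surj[OF finite_class.finite_UNIV inj_cub_mul[OF assms]] .
  then have ex: "\<exists>y. cub_mul d x y = cub_of 1"
    by (metis surjD)
  show ?thesis
    unfolding cub_inv_def if_P[OF ex] by (rule someI_ex[OF ex])
qed

lemma cub_inv_one: "cub_inv d (cub_of 1) = cub_of 1"
proof -
  have ex: "\<exists>y. cub_mul d (cub_of 1) y = cub_of 1"
    using cub_mul_one_left by blast
  have "cub_mul d (cub_of 1) (cub_inv d (cub_of 1)) = cub_of 1"
    unfolding cub_inv_def if_P[OF ex] by (rule someI_ex[OF ex])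
  then show ?thesis
    by (simp add: cub_mul_one_left)
qed

lemma cub_mul_div_cancel:
  fixes d :: "'a::{field,finite}"
  assumes "\<nexists>x. x ^ 3 = d" and "w \<noteq> cub_of 0"
  shows "cub_mul d w (cub_div d u w) = u"
  by (metis assms cub_div_def cub_mul_assoc cub_mul_commute cub_mul_cub_inv cub_mul_one_right)

lemma cub_div_mult_cancel:
  fixes d :: "'a::{field,finite}"
  assumes "\<nexists>x. x ^ 3 = d" and w': "cub_mul d w w' = cub_of 1" and "y \<noteq> cub_of 0"
  shows "cub_div d (cub_mul d x w') (cub_mul d y w') = cub_div d x y"
proof -
  have "cub_mul d (cub_mul d y w') w = y"
    using w' by (metis cub_mul_assoc cub_mul_commute cub_mul_one_right)
  then have "cub_mul d y w' \<noteq> cub_of 0"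
    using \<open>y \<noteq> cub_of 0\<close> cub_mul_zero_left by metis
  then have "cub_mul d y (cub_mul d w' (cub_inv d (cub_mul d y w'))) = cub_of 1"
    using cub_mul_cub_inv[OF assms(1)] cub_mul_assoc by metis
  then have "cub_mul d w' (cub_inv d (cub_mul d y w')) = cub_inv d y"
    using cub_inverse_unique cub_mul_cub_inv[OF assms(1,3)] by metis
  then show ?thesis
    unfolding cub_div_def by (metis cub_mul_assoc)
qed

definition cub_det :: "'a::field cub \<Rightarrow> 'a cub \<Rightarrow> 'a cub \<Rightarrow> 'a" where
  "cub_det x y z = (case x of (x1, x2, x3) \<Rightarrow> case y of (y1, y2, y3) \<Rightarrow> case z of (z1, z2, z3) \<Rightarrow>
     x1 * (y2 * z3 - y3 * z2) - x2 * (y1 * z3 - y3 * z1) + x3 * (y1 * z2 - y2 * z1))"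

text \<open>The determinant of multiplication by z in the basis 1, \<delta>^(1/3), \<delta>^(2/3).\<close>
definition cub_norm :: "'a::field \<Rightarrow> 'a cub \<Rightarrow> 'a" where
  "cub_norm d z = (case z of (z1, z2, z3) \<Rightarrow>
     z1 ^ 3 + d * z2 ^ 3 + d ^ 2 * z3 ^ 3 - 3 * d * z1 * z2 * z3)"

lemma cub_det_mul:
  "cub_det (cub_mul d z x) (cub_mul d z y) (cub_mul d z w) = cub_norm d z * cub_det x y w"
  by (cases x rule: prod_cases3; cases y rule: prod_cases3; cases z rule: prod_cases3;
      cases w rule: prod_cases3)
     (simp add: cub_mul_def cub_det_def cub_norm_def algebra_simps power2_eq_square power3_eq_cube)

lemma cub_det_zero_right: "cub_det x y (cub_of 0) = 0"
  by (cases x rule: prod_cases3; cases y rule: prod_cases3) (simp add: cub_det_def cub_of_def)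

lemma Hq_iff_cub_det: "(\<alpha>, \<beta>) \<in> Hq \<longleftrightarrow> cub_det \<alpha> \<beta> (cub_of 1) \<noteq> 0"
  by (cases \<alpha> rule: prod_cases3; cases \<beta> rule: prod_cases3) (simp add: Hq_def cub_det_def cub_of_def)

definition row_form :: "'a::field \<Rightarrow> 'a^3^3 \<Rightarrow> 3 \<Rightarrow> 'a cub \<times> 'a cub \<Rightarrow> 'a cub" where
  "row_form d A i p = cub_lin d (A$i$1) (A$i$2) (A$i$3) (fst p) (snd p)"

lemma denom_eq_row_form: "denom d A p = row_form d A 3 p"
  by (simp add: denom_def row_form_def)

lemma act_eq_row_forms:
  "act d A p = (cub_div d (row_form d A 1 p) (row_form d A 3 p),
                cub_div d (row_form d A 2 p) (row_form d A 3 p))"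
  by (simp add: act_def denom_def row_form_def)

lemma cub_det_row_forms:
  "cub_det (row_form d A 1 p) (row_form d A 2 p) (row_form d A 3 p)
     = det A * cub_det (fst p) (snd p) (cub_of 1)"
  by (cases "fst p" rule: prod_cases3; cases "snd p" rule: prod_cases3)
     (simp add: row_form_def cub_lin_def cub_det_def cub_add_def cub_mul_def cub_of_def
       det_3 algebra_simps)

definition cub_lin3 ::
    "'a::field \<Rightarrow> 'a \<Rightarrow> 'a \<Rightarrow> 'a \<Rightarrow> 'a cub \<Rightarrow> 'a cub \<Rightarrow> 'a cub \<Rightarrow> 'a cub" where
  "cub_lin3 d a b c u v w =
     cub_add (cub_add (cub_mul d (cub_of a) u) (cub_mul d (cub_of b) v)) (cub_mul d (cub_of c) w)"

lemma row_form_matrix_mult: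
  "row_form d (A ** B) i p =
     cub_lin3 d (A$i$1) (A$i$2) (A$i$3) (row_form d B 1 p) (row_form d B 2 p) (row_form d B 3 p)"
  by (cases "fst p" rule: prod_cases3; cases "snd p" rule: prod_cases3)
     (simp add: row_form_def matrix_matrix_mult_def sum_3 cub_mul_def cub_lin_def cub_lin3_def
       cub_add_def cub_of_def algebra_simps)

lemma cub_lin_mult_inverse:
  assumes "cub_mul d w w' = cub_of 1"
  shows "cub_lin d a b c (cub_mul d u w') (cub_mul d v w') = cub_mul d (cub_lin3 d a b c u v w) w'"
proof -
  obtain w1 w2 w3 w'1 w'2 w'3 where w: "w = (w1, w2, w3)" "w' = (w'1, w'2, w'3)"
    by (cases w rule: prod_cases3; cases w' rule: prod_cases3)
  obtain u1 u2 u3 v1 v2 v3 where uv: "u = (u1, u2, u3)" "v = (v1, v2, v3)"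
    by (cases u rule: prod_cases3; cases v rule: prod_cases3)
  have "w1 * w'1 + d * (w2 * w'3 + w3 * w'2) = 1" "w1 * w'2 + w2 * w'1 + d * (w3 * w'3) = 0"
    "w1 * w'3 + w2 * w'2 + w3 * w'1 = 0"
    using assms by (simp_all add: w cub_mul_def cub_of_def)
  then show ?thesis
    unfolding w uv cub_lin_def cub_lin3_def cub_mul_def cub_add_def cub_of_def
    by simp algebra
qed

lemma act_well_defined:
  fixes d :: "'a::{field,finite}"
  assumes nr: "\<nexists>x. x ^ 3 = d" and "invertible A" and "p \<in> Hq"
  shows "denom d A p \<noteq> cub_of 0 \<and> act d A p \<in> Hq"
proof -
  let ?u = "row_form d A 1 p" and ?v = "row_form d A 2 p" and ?w = "row_form d A 3 p"
  have det_uvw: "cub_det ?u ?v ?w \<noteq> 0"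
    using assms(2,3) by (cases p) (simp add: cub_det_row_forms invertible_det_nz Hq_iff_cub_det)
  then have w: "?w \<noteq> cub_of 0"
    by (metis cub_det_zero_right)
  define U V where "U = cub_div d ?u ?w" and "V = cub_div d ?v ?w"
  have "cub_det ?u ?v ?w = cub_det (cub_mul d ?w U) (cub_mul d ?w V) (cub_mul d ?w (cub_of 1))"
    by (simp add: U_def V_def cub_mul_div_cancel[OF nr w] cub_mul_one_right)
  also have "\<dots> = cub_norm d ?w * cub_det U V (cub_of 1)"
    by (rule cub_det_mul)
  finally have "(U, V) \<in> Hq"
    using det_uvw by (simp add: Hq_iff_cub_det)
  then show ?thesis
    using w by (simp add: denom_eq_row_form act_eq_row_forms U_def V_def)
qed

lemma act_mat_1: "act d (mat 1) p = p"
proof -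
  obtain \<alpha> \<beta> where p: "p = (\<alpha>, \<beta>)"
    by (cases p)
  have "cub_lin d 1 0 0 \<alpha> \<beta> = \<alpha>" "cub_lin d 0 1 0 \<alpha> \<beta> = \<beta>" "cub_lin d 0 0 1 \<alpha> \<beta> = cub_of 1"
    by (cases \<alpha> rule: prod_cases3; cases \<beta> rule: prod_cases3;
        simp add: cub_lin_def cub_mul_def cub_add_def cub_of_def)+
  then show ?thesis
    by (simp add: act_def denom_def p mat_def cub_div_def cub_inv_one cub_mul_one_right)
qed

lemma act_matrix_mult:
  fixes d :: "'a::{field,finite}"
  assumes nr: "\<nexists>x. x ^ 3 = d" and "invertible A" and "invertible B" and "p \<in> Hq"
  shows "act d (A ** B) p = act d A (act d B p)"
proof -
  let ?u = "row_form d B 1 p" and ?v = "row_form d B 2 p" and ?w = "row_form d B 3 p"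
  let ?num = "\<lambda>i. cub_lin3 d (A$i$1) (A$i$2) (A$i$3) ?u ?v ?w"
  define w' where "w' = cub_inv d ?w"
  have "denom d B p \<noteq> cub_of 0" and "denom d (A ** B) p \<noteq> cub_of 0"
    using act_well_defined[OF nr] assms invertible_mult by blast+
  then have w: "?w \<noteq> cub_of 0" and num3: "?num 3 \<noteq> cub_of 0"
    unfolding denom_eq_row_form row_form_matrix_mult .
  have w': "cub_mul d ?w w' = cub_of 1"
    unfolding w'_def using cub_mul_cub_inv[OF nr w] .
  have "act d B p = (cub_mul d ?u w', cub_mul d ?v w')"
    by (simp add: act_eq_row_forms cub_div_def w'_def)
  then have "row_form d A i (act d B p) = cub_mul d (?num i) w'" for i
    by (simp add: row_form_def cub_lin_mult_inverse[OF w'])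
  then have "act d A (act d B p) =
      (cub_div d (cub_mul d (?num 1) w') (cub_mul d (?num 3) w'),
       cub_div d (cub_mul d (?num 2) w') (cub_mul d (?num 3) w'))"
    by (simp only: act_eq_row_forms[of d A])
  also have "\<dots> = (cub_div d (?num 1) (?num 3), cub_div d (?num 2) (?num 3))"
    using cub_div_mult_cancel[OF nr w' num3] by simp
  also have "\<dots> = act d (A ** B) p"
    by (simp add: act_eq_row_forms row_form_matrix_mult)
  finally show ?thesis ..
qed

theorem lemma2p2:
  fixes \<delta> :: "'a::{field,finite}"
  assumes "CARD('a) mod 3 = 1"
    and "cubic_nonresidue \<delta>"
  shows "(\<forall>A :: 'a^3^3. \<forall>p \<in> Hq. invertible A \<longrightarrow>
            denom \<delta> A p \<noteq> cub_of 0 \<and> act \<delta> A p \<in> Hq)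
       \<and> (\<forall>p \<in> Hq. act \<delta> (mat 1) p = p)
       \<and> (\<forall>A B :: 'a^3^3. \<forall>p \<in> Hq. invertible A \<longrightarrow> invertible B \<longrightarrow>
            act \<delta> (A ** B) p = act \<delta> A (act \<delta> B p))"
proof -
  txt \<open>The congruence q = 1 mod 3 only ensures that cubic nonresidues exist.\<close>
  have nr: "\<nexists>x. x ^ 3 = \<delta>"
    using assms(2) by (simp add: cubic_nonresidue_def)
  show ?thesis
    using act_well_defined[OF nr] act_mat_1 act_matrix_mult[OF nr] by blast
qed

end
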